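(* Let $A$ be a finite arrangement of hyperplanes in general position in $\mathbb{R}^d$ (in particular, at most $d$ hyperplanes of $A$ pass through any point), let $m\le d+1$, and let $\ell_1,\dots,\ell_m$ be directions in $\mathbb{R}^d$ any $d$ of which are linearly independent. If $k\le\left\lceil\frac{|A|-d}{d+1}\right\rceil$, then $\bigcap_{i=1}^m R_A(k,\ell_i)\neq\emptyset$.
   Context: For a finite hyperplane arrangement $A$ in $\mathbb{R}^d$, a direction (nonzero vector) $\ell$ and a point $q$, let $\ell(q)$ be the number of hyperplanes of $A$ intersected by the open ray $\{q+t\ell: t>0\}$ (the ray does not contain $q$). For an integer $k$, $R_A(k,\ell):=\{q\in\mathbb{R}^d:\ell(q)\ge k\}$. *)

theory Defs
  imports "HOL-Analysis.Analysis"
begin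

definition is_hyperplane :: "'a::euclidean_space set \<Rightarrow> bool" where
  "is_hyperplane H \<longleftrightarrow> (\<exists>a b. a \<noteq> 0 \<and> H = {x. a \<bullet> x = b})"

definition general_position :: "'a::euclidean_space set set \<Rightarrow> bool" where
  "general_position A \<longleftrightarrow>
     (\<forall>S\<subseteq>A. S \<noteq> {} \<and> card S \<le> DIM('a) \<longrightarrow> aff_dim (\<Inter>S) = int DIM('a) - int (card S)) \<and>
     (\<forall>S\<subseteq>A. card S = DIM('a) + 1 \<longrightarrow> \<Inter>S = {})"

definition ray_count :: "'a::euclidean_space set set \<Rightarrow> 'a \<Rightarrow> 'a \<Rightarrow> nat" where
  "ray_count A l q = card {H \<in> A. \<exists>t::real. t > 0 \<and> q + t *\<^sub>R l \<in> H}"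

definition R_A :: "'a::euclidean_space set set \<Rightarrow> int \<Rightarrow> 'a \<Rightarrow> 'a set" where
  "R_A A k l = {q. int (ray_count A l q) \<ge> k}"

end

theory Submission
  imports Defs
begin

text \<open>
  Let d = DIM('a). Pad the directions to d + 1 directions L j indexed by the basis of 'a \<times> real,
  and let a point x of the probability simplex stand for the point with homogeneous coordinates
  (- \<Sum>j. x_j L j, h x), where h x is the product of the coordinates of x if some convex
  combination of the L j vanishes and 0 otherwise, so that points with h x = 0 lie at infinity.
  Colour x by j if the ray from this point in direction L j crosses at least k hyperplanes with a
  uniform margin. General position leaves at most d hyperplanes (nearly) incident with the point,
  and each other hyperplane is crossed in some direction L j with x_j > 0; as |A| - d exceeds
  (d + 1)(k - 1), pigeonhole gives the boundary condition of the Knaster-Kuratowski-Mazurkiewicz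
  lemma, which follows from Brouwer's fixed point theorem. A point of the simplex carrying all
  colours gives the required point, after pushing a point at infinity far out.
\<close>

section \<open>The probability simplex and the KKM lemma\<close>

definition prob_simplex :: "'a::euclidean_space set" where
  "prob_simplex = {x. (\<forall>j\<in>Basis. 0 \<le> x \<bullet> j) \<and> (\<Sum>j\<in>Basis. x \<bullet> j) = 1}"

lemma prob_simplex_eq_Int_halfspaces:
  "prob_simplex = (\<Inter>j\<in>Basis. {x. j \<bullet> x \<ge> 0}) \<inter> {x::'a::euclidean_space. One \<bullet> x = 1}"
proof -
  have "One \<bullet> x = (\<Sum>j\<in>Basis. x \<bullet> j)" for x :: 'a
    unfolding inner_commute[of One x] by (rule inner_sum_right)
  then show ?thesis by (auto simp: prob_simplex_def inner_commute)
qed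

lemma Basis_subset_prob_simplex: "Basis \<subseteq> prob_simplex"
  by (auto simp: prob_simplex_def inner_Basis if_distrib cong: sum.cong)

lemma prob_simplex_nonempty: "prob_simplex \<noteq> {}"
  using Basis_subset_prob_simplex nonempty_Basis by blast

lemma convex_prob_simplex: "convex prob_simplex"
  unfolding prob_simplex_eq_Int_halfspaces
  by (intro convex_Int convex_INT convex_halfspace_ge convex_hyperplane)

lemma compact_prob_simplex: "compact (prob_simplex :: 'a::euclidean_space set)"
proof -
  have "0 \<le> x \<bullet> j \<and> x \<bullet> j \<le> 1" if "x \<in> prob_simplex" "j \<in> Basis" for x :: 'a and j
    using that member_le_sum[of j Basis "inner x"] by (simp add: prob_simplex_def)
  then have "(prob_simplex :: 'a set) \<subseteq> cbox 0 One"
    unfolding subset_eq mem_box by simp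
  moreover have "closed (prob_simplex :: 'a set)"
    unfolding prob_simplex_eq_Int_halfspaces
    by (intro closed_Int closed_INT ballI closed_halfspace_ge closed_hyperplane)
  ultimately show ?thesis
    by (meson bounded_cbox bounded_subset compact_eq_bounded_closed)
qed

lemma normalized_weights_in_prob_simplex:
  assumes "\<forall>j\<in>Basis. 0 \<le> w j" and "0 < (\<Sum>j\<in>Basis. w j)"
  shows "(\<Sum>j\<in>Basis. (w j / (\<Sum>i\<in>Basis. w i)) *\<^sub>R j) \<in> prob_simplex"
  using assms by (simp add: prob_simplex_def sum_divide_distrib[symmetric])

theorem KKM:
  fixes C :: "'a::euclidean_space \<Rightarrow> 'a set"
  assumes C_closed: "\<And>j. j \<in> Basis \<Longrightarrow> closed (C j)"
    and cover: "\<And>x. x \<in> prob_simplex \<Longrightarrow> \<exists>j\<in>Basis. 0 < x \<bullet> j \<and> x \<in> C j"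
  shows "\<exists>x\<in>prob_simplex. \<forall>j\<in>Basis. x \<in> C j"
proof (rule ccontr)
  assume no_common: "\<not> ?thesis"
  define w where "w x j = infdist x (C j)" for x j
  have C_nonempty: "C j \<noteq> {}" if j: "j \<in> Basis" for j
  proof -
    obtain i where "i \<in> Basis" "0 < j \<bullet> i" "j \<in> C i"
      using cover[of j] j Basis_subset_prob_simplex by blast
    then show ?thesis using j by (cases "i = j") (auto simp: inner_Basis)
  qed
  have w_pos: "0 < (\<Sum>j\<in>Basis. w x j)" if x: "x \<in> prob_simplex" for x
  proof -
    obtain j where j: "j \<in> Basis" "x \<notin> C j" using no_common x by blast
    then have "infdist x (C j) \<noteq> 0"
      using in_closed_iff_infdist_zero[OF C_closed C_nonempty, OF j(1) j(1)] by blast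
    then have "0 < w x j" using infdist_nonneg[of x "C j"] unfolding w_def by linarith
    also have "w x j \<le> (\<Sum>j\<in>Basis. w x j)"
      using j(1) by (intro member_le_sum) (simp_all add: w_def infdist_nonneg)
    finally show ?thesis .
  qed
  define f where "f x = (\<Sum>j\<in>Basis. (w x j / (\<Sum>i\<in>Basis. w x i)) *\<^sub>R j)" for x
  have w_cont: "continuous_on prob_simplex (\<lambda>x. w x j)" for j
    unfolding w_def by (intro continuous_on_infdist continuous_on_id)
  have "continuous_on prob_simplex f"
    unfolding f_def using w_pos
    by (intro continuous_on_sum continuous_on_scaleR continuous_on_divide w_cont continuous_on_const)
      (metis less_irrefl)
  moreover have "f \<in> prob_simplex \<rightarrow> prob_simplex"
    using w_pos unfolding f_def
    by (intro Pi_I normalized_weights_in_prob_simplex) (simp_all add: w_def infdist_nonneg)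
  ultimately obtain x where x: "x \<in> prob_simplex" "f x = x"
    using brouwer[OF compact_prob_simplex convex_prob_simplex prob_simplex_nonempty] by blast
  then obtain j where j: "j \<in> Basis" "0 < x \<bullet> j" "x \<in> C j" using cover by blast
  have "f x \<bullet> j = 0" using j by (simp add: f_def w_def)
  with x(2) j(2) show False by simp
qed

section \<open>Rays crossing hyperplanes\<close>

lemma hyperplane_equations:
  assumes "\<forall>H\<in>A. is_hyperplane H"
  obtains na :: "'a::euclidean_space set \<Rightarrow> 'a" and nb
    where "\<And>H. H \<in> A \<Longrightarrow> na H \<noteq> 0 \<and> H = {x. na H \<bullet> x = nb H}"
proof -
  have "\<forall>H\<in>A. \<exists>p. fst p \<noteq> 0 \<and> H = {x. fst p \<bullet> x = snd p}"
    using assms by (auto simp: is_hyperplane_def)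
  then obtain p where "\<forall>H\<in>A. fst (p H) \<noteq> 0 \<and> H = {x. fst (p H) \<bullet> x = snd (p H)}"
    by (rule bchoice[THEN exE])
  then show thesis by (intro that[of "\<lambda>H. fst (p H)" "\<lambda>H. snd (p H)"]) auto
qed

lemma ray_meets_hyperplane:
  fixes a v q :: "'a::euclidean_space"
  assumes "0 < (a \<bullet> v) * (b - a \<bullet> q)"
  shows "\<exists>t>0. a \<bullet> (q + t *\<^sub>R v) = b"
proof (intro exI conjI)
  have "a \<bullet> v \<noteq> 0" using assms by auto
  then show "a \<bullet> (q + ((b - a \<bullet> q) / (a \<bullet> v)) *\<^sub>R v) = b"
    by (simp add: inner_add_right)
  show "0 < (b - a \<bullet> q) / (a \<bullet> v)"
    using assms by (auto simp: zero_less_divide_iff zero_less_mult_iff)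
qed

lemma card_le_ray_count:
  assumes "finite A" and "X \<subseteq> A" and "\<And>H. H \<in> X \<Longrightarrow> \<exists>t>0. q + t *\<^sub>R v \<in> H"
  shows "card X \<le> ray_count A v q"
  unfolding ray_count_def using assms by (intro card_mono) auto

text \<open>(U, r) are homogeneous coordinates of the point -(1/r) U; for r = 0 a point far out in
  direction -U lies on the same side as this point at infinity of every hyperplane not parallel
  to U.\<close>
lemma point_with_homogeneous_sides:
  fixes U :: "'a::euclidean_space" and na :: "'h \<Rightarrow> 'a"
  assumes "finite A" and "0 \<le> r"
  obtains q where "\<And>H v. H \<in> A \<Longrightarrow> 0 < (na H \<bullet> v) * (na H \<bullet> U + nb H * r)
    \<Longrightarrow> 0 < (na H \<bullet> v) * (nb H - na H \<bullet> q)"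
proof (cases "r = 0")
  case False
  with assms(2) have "0 < r" by simp
  show thesis
  proof (rule that[of "- (1 / r) *\<^sub>R U"])
    fix H v assume "0 < (na H \<bullet> v) * (na H \<bullet> U + nb H * r)"
    moreover have "nb H - na H \<bullet> (- (1 / r) *\<^sub>R U) = (na H \<bullet> U + nb H * r) / r"
      using \<open>0 < r\<close> by (simp add: add_divide_distrib)
    ultimately show "0 < (na H \<bullet> v) * (nb H - na H \<bullet> (- (1 / r) *\<^sub>R U))"
      using \<open>0 < r\<close> by (simp add: zero_less_mult_iff zero_less_divide_iff)
  qed
next
  case True
  define T where "T = 1 + (\<Sum>H\<in>A. \<bar>nb H\<bar> / \<bar>na H \<bullet> U\<bar>)"
  have T: "\<bar>nb H\<bar> < T * \<bar>na H \<bullet> U\<bar>" if "H \<in> A" "na H \<bullet> U \<noteq> 0" for H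
  proof -
    have "\<bar>nb H\<bar> / \<bar>na H \<bullet> U\<bar> < T"
      unfolding T_def using member_le_sum[OF that(1) _ assms(1), of "\<lambda>H. \<bar>nb H\<bar> / \<bar>na H \<bullet> U\<bar>"]
      by simp
    with that(2) show ?thesis by (simp add: divide_less_eq)
  qed
  show thesis
  proof (rule that[of "- T *\<^sub>R U"])
    fix H v assume "H \<in> A" and "0 < (na H \<bullet> v) * (na H \<bullet> U + nb H * r)"
    then have "0 < (na H \<bullet> v) * (na H \<bullet> U)"
      using True by simp
    moreover from this have "\<bar>nb H\<bar> < T * \<bar>na H \<bullet> U\<bar>"
      using T \<open>H \<in> A\<close> by fastforce
    ultimately have "0 < (na H \<bullet> v) * (nb H + T * (na H \<bullet> U))"
      by (smt (verit) distrib_left zero_less_mult_iff)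
    then show "0 < (na H \<bullet> v) * (nb H - na H \<bullet> - T *\<^sub>R U)"
      by simp
  qed
qed

lemma closed_Collect_card_ge:
  fixes P :: "'h \<Rightarrow> 'b::topological_space set"
  assumes "finite A" and "\<And>H. H \<in> A \<Longrightarrow> closed (P H)"
  shows "closed {x. K \<le> card {H\<in>A. x \<in> P H}}"
proof -
  have "{x. K \<le> card {H\<in>A. x \<in> P H}} = (\<Union>B\<in>{B. B \<subseteq> A \<and> card B = K}. \<Inter>H\<in>B. P H)"
  proof (intro set_eqI iffI)
    fix x assume "x \<in> {x. K \<le> card {H\<in>A. x \<in> P H}}"
    then have "K \<le> card {H\<in>A. x \<in> P H}" by simp
    then obtain B where B: "B \<subseteq> {H\<in>A. x \<in> P H}" "card B = K"
      by (rule obtain_subset_with_card_n)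
    then have "B \<in> {B. B \<subseteq> A \<and> card B = K}" and "x \<in> (\<Inter>H\<in>B. P H)" by auto
    then show "x \<in> (\<Union>B\<in>{B. B \<subseteq> A \<and> card B = K}. \<Inter>H\<in>B. P H)" by (rule UN_I)
  next
    fix x assume "x \<in> (\<Union>B\<in>{B. B \<subseteq> A \<and> card B = K}. \<Inter>H\<in>B. P H)"
    then obtain B where B: "card B = K" "B \<subseteq> {H\<in>A. x \<in> P H}" by auto
    have "card B \<le> card {H\<in>A. x \<in> P H}"
      using assms(1) B(2) by (intro card_mono) simp_all
    with B(1) show "x \<in> {x. K \<le> card {H\<in>A. x \<in> P H}}" by simp
  qed
  moreover have "finite {B. B \<subseteq> A \<and> card B = K}"
    using assms(1) by simp
  moreover have "closed (\<Inter>H\<in>B. P H)" if "B \<subseteq> A" for B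
    using assms(2) that by (intro closed_INT) blast
  ultimately show ?thesis by (auto intro: closed_UN)
qed

lemma compact_pos_lower_bound:
  fixes f :: "'a::metric_space \<Rightarrow> real"
  assumes "compact S" and "continuous_on S f" and "\<And>x. x \<in> S \<Longrightarrow> 0 < f x"
  shows "\<exists>e>0. \<forall>x\<in>S. e \<le> f x"
proof (cases "S = {}")
  case False
  then obtain x0 where "x0 \<in> S" "\<forall>x\<in>S. f x0 \<le> f x"
    using continuous_attains_inf[OF assms(1) _ assms(2)] by blast
  with assms(3) show ?thesis by blast
qed (auto intro: exI[of _ 1])

lemma uniformly_few_small_values:
  fixes g :: "'h \<Rightarrow> 'a::metric_space \<Rightarrow> real"
  assumes "compact S" and "finite A" and "\<And>H. H \<in> A \<Longrightarrow> continuous_on S (g H)"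
    and no_common_zero: "\<And>x B. x \<in> S \<Longrightarrow> B \<subseteq> A \<Longrightarrow> card B = Suc n \<Longrightarrow> \<exists>H\<in>B. g H x \<noteq> 0"
  obtains eps where "0 < eps" and "\<And>x. x \<in> S \<Longrightarrow> card {H\<in>A. \<bar>g H x\<bar> < eps} \<le> n"
proof -
  define Bs where "Bs = {B. B \<subseteq> A \<and> card B = Suc n}"
  have "finite Bs" using assms(2) unfolding Bs_def by simp
  have "\<forall>B\<in>Bs. \<exists>e>0. \<forall>x\<in>S. e \<le> (\<Sum>H\<in>B. \<bar>g H x\<bar>)"
  proof
    fix B assume B: "B \<in> Bs"
    have "B \<subseteq> A" "finite B" using B assms(2) finite_subset unfolding Bs_def by auto
    have pos: "0 < (\<Sum>H\<in>B. \<bar>g H x\<bar>)" if x: "x \<in> S" for x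
    proof -
      obtain H where "H \<in> B" "g H x \<noteq> 0" using no_common_zero[OF x] B unfolding Bs_def by blast
      then show ?thesis
        using member_le_sum[of H B "\<lambda>H. \<bar>g H x\<bar>"] \<open>finite B\<close> by simp
    qed
    have cont: "continuous_on S (\<lambda>x. \<Sum>H\<in>B. \<bar>g H x\<bar>)"
      using assms(3) \<open>B \<subseteq> A\<close> by (intro continuous_on_sum continuous_on_rabs) auto
    show "\<exists>e>0. \<forall>x\<in>S. e \<le> (\<Sum>H\<in>B. \<bar>g H x\<bar>)"
      by (rule compact_pos_lower_bound[OF assms(1) cont pos])
  qed
  from bchoice[OF this]
  obtain e where e: "\<forall>B\<in>Bs. 0 < e B \<and> (\<forall>x\<in>S. e B \<le> (\<Sum>H\<in>B. \<bar>g H x\<bar>))"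
    by blast
  define eps where "eps = Min (insert 1 (e ` Bs)) / Suc n"
  have "0 < eps" using e \<open>finite Bs\<close> by (auto simp: eps_def)
  moreover have "card {H\<in>A. \<bar>g H x\<bar> < eps} \<le> n" if x: "x \<in> S" for x
  proof (rule ccontr)
    assume "\<not> ?thesis"
    then have "Suc n \<le> card {H\<in>A. \<bar>g H x\<bar> < eps}" by simp
    then obtain B where B: "B \<subseteq> {H\<in>A. \<bar>g H x\<bar> < eps}" "card B = Suc n"
      by (rule obtain_subset_with_card_n)
    then have "B \<in> Bs" and "finite B" and "B \<noteq> {}"
      unfolding Bs_def by (auto simp: card_ge_0_finite)
    then have "(\<Sum>H\<in>B. \<bar>g H x\<bar>) < (\<Sum>H\<in>B. eps)"
      using B(1) by (intro sum_strict_mono) auto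
    also have "\<dots> = Min (insert 1 (e ` Bs))"
      using B(2) by (simp add: eps_def)
    also have "\<dots> \<le> e B"
      using \<open>finite Bs\<close> \<open>B \<in> Bs\<close> by simp
    finally show False using e \<open>B \<in> Bs\<close> x by (meson not_le)
  qed
  ultimately show thesis by (rule that)
qed

lemma weighted_average_le_some_term:
  fixes w y :: "'i \<Rightarrow> real"
  assumes "finite I" and "\<And>i. i \<in> I \<Longrightarrow> 0 \<le> w i" and "(\<Sum>i\<in>I. w i) = 1"
  shows "\<exists>i\<in>I. 0 < w i \<and> (\<Sum>i\<in>I. w i * y i) \<le> y i"
proof (rule ccontr)
  assume none: "\<not> ?thesis"
  define avg where "avg = (\<Sum>i\<in>I. w i * y i)"
  have le: "w i * y i \<le> w i * avg" if "i \<in> I" for i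
    using none assms(2)[OF that] that unfolding avg_def
    by (cases "w i = 0") (auto simp: not_le)
  obtain i0 where "i0 \<in> I" "0 < w i0"
    using assms(2,3) by (metis less_eq_real_def sum.neutral zero_neq_one)
  then have "w i0 * y i0 < w i0 * avg"
    using none unfolding avg_def by (auto simp: not_le)
  then have "avg < (\<Sum>i\<in>I. w i * avg)"
    unfolding avg_def using \<open>i0 \<in> I\<close> le
    by (intro sum_strict_mono_ex1[OF assms(1)]) (auto simp: avg_def)
  also have "\<dots> = avg" using assms(3) by (simp add: sum_distrib_right[symmetric])
  finally show False by simp
qed

lemma positive_combination_zero_imp_pos_term:
  fixes c y :: "'i \<Rightarrow> real"
  assumes "finite I" and "\<And>i. i \<in> I \<Longrightarrow> 0 < c i" and "(\<Sum>i\<in>I. c i * y i) = 0"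
    and "i0 \<in> I" and "y i0 \<noteq> 0"
  shows "\<exists>i\<in>I. 0 < y i"
proof (rule ccontr)
  assume none: "\<not> ?thesis"
  then have "\<forall>i\<in>I. c i * y i \<le> 0"
    using assms(2) by (auto simp: mult_le_0_iff not_less less_imp_le)
  moreover have "c i0 * y i0 < 0"
  proof -
    have "y i0 < 0" using none assms(4,5) by (auto simp: not_less order_le_less)
    with assms(2,4) show ?thesis by (simp add: mult_pos_neg)
  qed
  ultimately have "(\<Sum>i\<in>I. c i * y i) < (\<Sum>i\<in>I. 0)"
    using assms(4) by (intro sum_strict_mono_ex1[OF assms(1)]) auto
  with assms(3) show False by simp
qed

lemma positive_combination_zero_imp_both_signs:
  fixes c y :: "'i \<Rightarrow> real"
  assumes "finite I" and "\<And>i. i \<in> I \<Longrightarrow> 0 < c i" and "(\<Sum>i\<in>I. c i * y i) = 0"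
    and "i0 \<in> I" and "y i0 \<noteq> 0"
  shows "(\<exists>i\<in>I. 0 < y i) \<and> (\<exists>i\<in>I. y i < 0)"
proof
  show "\<exists>i\<in>I. 0 < y i" by (rule positive_combination_zero_imp_pos_term[OF assms])
  have "(\<Sum>i\<in>I. c i * - y i) = 0" using assms(3) by (simp add: sum_negf)
  then show "\<exists>i\<in>I. y i < 0"
    using positive_combination_zero_imp_pos_term[OF assms(1,2) _ assms(4), where y = "\<lambda>i. - y i"]
      assms(5) by auto
qed

lemma card_UN_pigeonhole:
  assumes "finite J" and "card J * n < card (\<Union>j\<in>J. X j)"
  shows "\<exists>j\<in>J. n < card (X j)"
proof (rule ccontr)
  assume "\<not> ?thesis"
  then have "(\<Sum>j\<in>J. card (X j)) \<le> card J * n"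
    using sum_mono[of J "\<lambda>j. card (X j)" "\<lambda>_. n"] by (auto simp: not_less)
  with card_UN_le[OF assms(1), of X] assms(2) show False by linarith
qed

lemma nonneg_combination_of_independent_nonzero:
  fixes L :: "'i \<Rightarrow> 'a::euclidean_space"
  assumes "independent V" and "finite I" and "\<And>i. i \<in> I \<Longrightarrow> 0 \<le> c i"
    and "(\<Sum>i\<in>I. c i) \<noteq> 0" and "\<And>i. i \<in> I \<Longrightarrow> 0 < c i \<Longrightarrow> L i \<in> V"
  shows "(\<Sum>i\<in>I. c i *\<^sub>R L i) \<noteq> 0"
proof
  assume zero: "(\<Sum>i\<in>I. c i *\<^sub>R L i) = 0"
  obtain f :: "'a \<Rightarrow> real" where f: "linear f" "\<And>v. v \<in> V \<Longrightarrow> f v = 1"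
    using linear_independent_extend[OF assms(1), of "\<lambda>_. 1"] by blast
  have "f (\<Sum>i\<in>I. c i *\<^sub>R L i) = (\<Sum>i\<in>I. c i * f (L i))"
    by (simp add: linear_sum[OF f(1)] linear_scale[OF f(1)])
  also have "\<dots> = (\<Sum>i\<in>I. c i)"
    using assms(3,5) f(2) by (intro sum.cong) (auto simp: order_le_less)
  finally have "f (\<Sum>i\<in>I. c i *\<^sub>R L i) = (\<Sum>i\<in>I. c i)" .
  with zero assms(4) linear_0[OF f(1)] show False by simp
qed

lemma independent_card_DIM_not_orthogonal:
  fixes V :: "'a::euclidean_space set"
  assumes "independent V" and "card V = DIM('a)" and "a \<noteq> 0"
  shows "\<exists>v\<in>V. a \<bullet> v \<noteq> 0"
proof (rule ccontr)
  assume "\<not> ?thesis"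
  moreover have "a \<in> span V"
    using card_ge_dim_independent[of V UNIV] assms(1,2) by auto
  ultimately have "a \<bullet> a = 0"
    using orthogonal_to_span[of a V a] by (auto simp: orthogonal_def)
  with assms(3) show False by simp
qed

lemma le_ceiling_imp_mult_bound:
  assumes "1 \<le> k" and "k \<le> \<lceil>(real n - real d) / (real d + 1)\<rceil>"
  shows "Suc d * (nat k - 1) + d < n"
proof -
  have "real_of_int k - 1 < (real n - real d) / (real d + 1)"
    using assms(2) by (simp add: le_ceiling_iff)
  then have "(real_of_int k - 1) * (real d + 1) < real n - real d"
    by (simp add: pos_less_divide_eq)
  moreover have "real (nat k) = real_of_int k" using assms(1) by simp
  ultimately have "real (Suc d * nat k) < real n + 1" by (simp add: algebra_simps)
  moreover have "Suc d * (nat k - 1) + Suc d = Suc d * nat k"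
    using assms(1) by (cases "nat k") auto
  ultimately show ?thesis by linarith
qed

section \<open>Homogenized arrangements\<close>

lemma general_position_vertex:
  assumes "general_position A" and "B \<subseteq> A" and "card B = DIM('a::euclidean_space)"
  shows "\<exists>p::'a. \<Inter>B = {p}"
proof -
  have "B \<noteq> {}" using assms(3) by auto
  with assms have "aff_dim (\<Inter>B) = 0" by (simp add: general_position_def)
  then show ?thesis by (simp add: aff_dim_eq_0)
qed

lemma general_position_empty_Inter:
  assumes "general_position A" and "B \<subseteq> A" and "card B = Suc DIM('a::euclidean_space)"
  shows "\<Inter>B = ({} :: 'a set)"
  using assms by (simp add: general_position_def)

locale admissible_directions =
  fixes L :: "'b::euclidean_space \<Rightarrow> 'a::euclidean_space"
  assumes zero_combination_interior:
      "x \<in> prob_simplex \<Longrightarrow> (\<Sum>j\<in>Basis. (x \<bullet> j) *\<^sub>R L j) = 0 \<Longrightarrow> j \<in> Basis \<Longrightarrow> 0 < x \<bullet> j"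
    and zero_combination_spanning:
      "x \<in> prob_simplex \<Longrightarrow> (\<Sum>j\<in>Basis. (x \<bullet> j) *\<^sub>R L j) = 0 \<Longrightarrow> a \<noteq> 0 \<Longrightarrow> \<exists>j\<in>Basis. a \<bullet> L j \<noteq> 0"

locale arrangement_with_directions =
  admissible_directions L for L :: "'b::euclidean_space \<Rightarrow> 'a::euclidean_space" +
  fixes A :: "'a set set" and na :: "'a set \<Rightarrow> 'a" and nb :: "'a set \<Rightarrow> real"
  assumes finite_A: "finite A"
    and hyperplane_eq: "H \<in> A \<Longrightarrow> na H \<noteq> 0 \<and> H = {x. na H \<bullet> x = nb H}"
    and general_position: "general_position A"
begin

text \<open>x stands for the point with homogeneous coordinates (- comb x, height x); height vanishes on
  the boundary of the simplex, and everywhere if no convex combination of the L j vanishes. The ray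
  from this point in direction v crosses H iff (na H \<bullet> v) * level H x > 0.\<close>

definition comb :: "'b \<Rightarrow> 'a" where
  "comb x = (\<Sum>j\<in>Basis. (x \<bullet> j) *\<^sub>R L j)"

definition height :: "'b \<Rightarrow> real" where
  "height x = (if \<exists>y\<in>prob_simplex. comb y = 0 then \<Prod>j\<in>Basis. x \<bullet> j else 0)"

definition level :: "'a set \<Rightarrow> 'b \<Rightarrow> real" where
  "level H x = na H \<bullet> comb x + nb H * height x"

lemma height_nonneg: "x \<in> prob_simplex \<Longrightarrow> 0 \<le> height x"
  by (auto simp: height_def prob_simplex_def intro: prod_nonneg)

lemma comb_nonzero_if_height_zero:
  assumes "x \<in> prob_simplex" and "height x = 0"
  shows "comb x \<noteq> 0"
proof
  assume "comb x = 0"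
  with assms(1) have "\<exists>y\<in>prob_simplex. comb y = 0" by blast
  with assms(2) have "(\<Prod>j\<in>Basis. x \<bullet> j) = 0" unfolding height_def by argo
  then obtain j where "j \<in> Basis" "x \<bullet> j = 0" by auto
  with zero_combination_interior[OF assms(1)] \<open>comb x = 0\<close> show False
    by (force simp: comb_def)
qed

lemma positive_height_interior:
  assumes "x \<in> prob_simplex" and "0 < height x" and "j \<in> Basis"
  shows "0 < x \<bullet> j"
proof -
  have "height x = (\<Prod>j\<in>Basis. x \<bullet> j)" using assms(2) by (auto simp: height_def split: if_splits)
  with assms(2) have "(\<Prod>j\<in>Basis. x \<bullet> j) \<noteq> 0" by linarith
  with assms(3) have "x \<bullet> j \<noteq> 0" by auto
  with assms(1,3) show ?thesis by (auto simp: prob_simplex_def order_le_less)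
qed

lemma normal_has_both_signs:
  assumes "\<exists>y\<in>prob_simplex. comb y = 0" and "H \<in> A"
  shows "(\<exists>j\<in>Basis. 0 < na H \<bullet> L j) \<and> (\<exists>j\<in>Basis. na H \<bullet> L j < 0)"
proof -
  obtain y where y: "y \<in> prob_simplex" "comb y = 0" using assms(1) by blast
  obtain j0 where "j0 \<in> Basis" "na H \<bullet> L j0 \<noteq> 0"
    using zero_combination_spanning[OF y(1)] y(2) hyperplane_eq[OF assms(2)] by (auto simp: comb_def)
  moreover have "(\<Sum>j\<in>Basis. (y \<bullet> j) * (na H \<bullet> L j)) = na H \<bullet> comb y"
    by (simp add: comb_def inner_sum_right)
  ultimately show ?thesis
    using zero_combination_interior[OF y(1)] y(2) unfolding comb_def
    by (intro positive_combination_zero_imp_both_signs[of Basis]) auto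
qed

lemma continuous_level: "continuous_on UNIV (level H)"
proof -
  have "continuous_on UNIV height"
    unfolding height_def by (cases "\<exists>y\<in>prob_simplex. comb y = 0") (simp_all add: continuous_intros)
  then show ?thesis unfolding level_def comb_def by (intro continuous_intros)
qed

lemma mem_hyperplane_iff: "H \<in> A \<Longrightarrow> p \<in> H \<longleftrightarrow> na H \<bullet> p = nb H"
  using hyperplane_eq by blast

lemma level_no_common_zero:
  assumes x: "x \<in> prob_simplex" and B: "B \<subseteq> A" "card B = Suc DIM('a)"
  shows "\<exists>H\<in>B. level H x \<noteq> 0"
proof (rule ccontr)
  assume "\<not> ?thesis"
  then have zero: "na H \<bullet> comb x + nb H * height x = 0" if "H \<in> B" for H
    using that by (auto simp: level_def)
  consider "0 < height x" | "height x = 0" using height_nonneg[OF x] by linarith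
  then show False
  proof cases
    case 1
    have "- (1 / height x) *\<^sub>R comb x \<in> H" if "H \<in> B" for H
    proof -
      have "na H \<bullet> (- (1 / height x) *\<^sub>R comb x) = - (na H \<bullet> comb x) / height x"
        by simp
      also have "\<dots> = nb H"
        using zero[OF that] 1 by (simp add: field_simps)
      finally show ?thesis using that B(1) by (auto simp: mem_hyperplane_iff)
    qed
    then have "- (1 / height x) *\<^sub>R comb x \<in> \<Inter>B" by blast
    with general_position_empty_Inter[OF general_position B] show False by blast
  next
    case 2
    have "DIM('a) \<le> card B" using B(2) by simp
    then obtain B' where B': "B' \<subseteq> B" "card B' = DIM('a)"
      by (rule obtain_subset_with_card_n)
    then obtain p where p: "\<Inter>B' = {p}"
      using general_position_vertex[OF general_position, of B'] B(1) by blast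
    have "p + comb x \<in> \<Inter>B'"
    proof
      fix H assume "H \<in> B'"
      with B'(1) B(1) have "H \<in> A" by blast
      moreover from p \<open>H \<in> B'\<close> have "p \<in> H" by blast
      ultimately have "na H \<bullet> p = nb H" by (simp add: mem_hyperplane_iff)
      with zero[of H] 2 \<open>H \<in> B'\<close> B'(1) \<open>H \<in> A\<close> show "p + comb x \<in> H"
        by (auto simp: mem_hyperplane_iff inner_add_right)
    qed
    with p comb_nonzero_if_height_zero[OF x 2] show False by auto
  qed
qed

lemma crossing_direction_finite_point:
  assumes x: "x \<in> prob_simplex" and "0 < height x" and "H \<in> A" and "level H x \<noteq> 0"
  shows "\<exists>j\<in>Basis. 0 < x \<bullet> j \<and> 0 < (na H \<bullet> L j) * level H x"
proof -
  have "\<exists>y\<in>prob_simplex. comb y = 0"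
    using assms(2) by (auto simp: height_def split: if_splits)
  from normal_has_both_signs[OF this assms(3)] obtain j where "j \<in> Basis" "0 < (na H \<bullet> L j) * level H x"
    using assms(4) by (metis linorder_neqE_linordered_idom mult_neg_neg mult_pos_pos)
  with positive_height_interior[OF x assms(2)] show ?thesis by blast
qed

lemma crossing_direction_point_at_infinity:
  assumes x: "x \<in> prob_simplex" and "height x = 0" and "H \<in> A"
  shows "\<exists>j\<in>Basis. 0 < x \<bullet> j \<and> level H x * level H x \<le> (na H \<bullet> L j) * level H x"
proof -
  have "level H x = (\<Sum>j\<in>Basis. (x \<bullet> j) * (na H \<bullet> L j))"
    using assms(2) by (simp add: level_def comb_def inner_sum_right)
  then have "level H x * level H x = (\<Sum>j\<in>Basis. (x \<bullet> j) * ((na H \<bullet> L j) * level H x))"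
    by (simp add: sum_distrib_right mult.assoc)
  with x show ?thesis
    using weighted_average_le_some_term[of Basis "inner x" "\<lambda>j. (na H \<bullet> L j) * level H x"]
    by (auto simp: prob_simplex_def)
qed

lemma uniform_crossing_margin:
  assumes "0 < eps"
  obtains \<delta> where "0 < \<delta>"
    and "\<And>x H. x \<in> prob_simplex \<Longrightarrow> H \<in> A \<Longrightarrow> eps \<le> \<bar>level H x\<bar>
      \<Longrightarrow> \<exists>j\<in>Basis. 0 < x \<bullet> j \<and> \<delta> \<le> (na H \<bullet> L j) * level H x"
proof -
  define D where "D = {\<bar>na H \<bullet> L j\<bar> | H j. H \<in> A \<and> j \<in> Basis \<and> na H \<bullet> L j \<noteq> 0}"
  define d0 where "d0 = Min (insert 1 D)"
  have "finite D"
    by (rule finite_subset[of _ "(\<lambda>(H, j). \<bar>na H \<bullet> L j\<bar>) ` (A \<times> Basis)"])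
      (auto simp: D_def finite_A)
  then have "0 < d0" unfolding d0_def D_def by auto
  have d0: "d0 \<le> \<bar>na H \<bullet> L j\<bar>" if "H \<in> A" "j \<in> Basis" "na H \<bullet> L j \<noteq> 0" for H j
    unfolding d0_def by (rule Min_le) (use \<open>finite D\<close> that in \<open>auto simp: D_def\<close>)
  show thesis
  proof (rule that[of "min (d0 * eps) (eps * eps)"])
    show "0 < min (d0 * eps) (eps * eps)" using \<open>0 < d0\<close> assms by simp
    fix x H assume x: "x \<in> prob_simplex" and "H \<in> A" and eps: "eps \<le> \<bar>level H x\<bar>"
    consider "0 < height x" | "height x = 0" using height_nonneg[OF x] by linarith
    then show "\<exists>j\<in>Basis. 0 < x \<bullet> j \<and> min (d0 * eps) (eps * eps) \<le> (na H \<bullet> L j) * level H x"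
    proof cases
      case 1
      with crossing_direction_finite_point[OF x _ \<open>H \<in> A\<close>] eps assms obtain j
        where j: "j \<in> Basis" "0 < x \<bullet> j" "0 < (na H \<bullet> L j) * level H x" by force
      then have "(na H \<bullet> L j) * level H x = \<bar>na H \<bullet> L j\<bar> * \<bar>level H x\<bar>"
        by (simp add: abs_mult[symmetric])
      moreover have "na H \<bullet> L j \<noteq> 0" using j(3) by auto
      ultimately have "d0 * eps \<le> (na H \<bullet> L j) * level H x"
        using d0[OF \<open>H \<in> A\<close> j(1)] eps \<open>0 < d0\<close> assms by (simp add: mult_mono)
      then show ?thesis using j(1,2) by auto
    next
      case 2
      with crossing_direction_point_at_infinity[OF x _ \<open>H \<in> A\<close>] obtain j
        where j: "j \<in> Basis" "0 < x \<bullet> j" "level H x * level H x \<le> (na H \<bullet> L j) * level H x" by blast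
      have "eps * eps \<le> \<bar>level H x\<bar> * \<bar>level H x\<bar>" using eps assms by (intro mult_mono) auto
      with j show ?thesis by (auto simp: abs_mult[symmetric])
    qed
  qed
qed

lemma deep_colour_exists:
  assumes few: "\<And>x. x \<in> prob_simplex \<Longrightarrow> card {H\<in>A. \<bar>level H x\<bar> < eps} \<le> DIM('a)"
    and crossing: "\<And>x H. x \<in> prob_simplex \<Longrightarrow> H \<in> A \<Longrightarrow> eps \<le> \<bar>level H x\<bar>
      \<Longrightarrow> \<exists>j\<in>Basis. 0 < x \<bullet> j \<and> \<delta> \<le> (na H \<bullet> L j) * level H x"
    and count: "DIM('b) * (K - 1) + DIM('a) < card A"
    and x: "x \<in> prob_simplex"
  shows "\<exists>j\<in>Basis. 0 < x \<bullet> j \<and> K \<le> card {H\<in>A. \<delta> \<le> (na H \<bullet> L j) * level H x}"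
proof -
  define J where "J = {j\<in>Basis. 0 < x \<bullet> j}"
  define X where "X j = {H\<in>A. \<delta> \<le> (na H \<bullet> L j) * level H x}" for j
  have "card J * (K - 1) \<le> DIM('b) * (K - 1)"
    unfolding J_def by (intro mult_right_mono card_mono) auto
  also have "\<dots> < card A - card {H\<in>A. \<bar>level H x\<bar> < eps}"
    using count few[OF x] by linarith
  also have "\<dots> = card {H\<in>A. eps \<le> \<bar>level H x\<bar>}"
    using finite_A by (subst card_Diff_subset[symmetric]) (auto intro: arg_cong[where f = card])
  also have "\<dots> \<le> card (\<Union>j\<in>J. X j)"
    using crossing[OF x] finite_A by (intro card_mono) (auto simp: J_def X_def)
  finally obtain j where "j \<in> J" "K - 1 < card (X j)"
    using card_UN_pigeonhole[of J] by (auto simp: J_def)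
  then show ?thesis by (auto simp: J_def X_def)
qed

theorem deep_point_all_directions:
  assumes "DIM('b) * (K - 1) + DIM('a) < card A"
  shows "\<exists>q. \<forall>j\<in>Basis. K \<le> ray_count A (L j) q"
proof -
  obtain eps where eps: "0 < eps" "\<And>x. x \<in> prob_simplex \<Longrightarrow> card {H\<in>A. \<bar>level H x\<bar> < eps} \<le> DIM('a)"
    using uniformly_few_small_values[OF compact_prob_simplex finite_A
        continuous_on_subset[OF continuous_level subset_UNIV] level_no_common_zero] by blast
  obtain \<delta> where "0 < \<delta>" and crossing: "\<And>x H. x \<in> prob_simplex \<Longrightarrow> H \<in> A \<Longrightarrow> eps \<le> \<bar>level H x\<bar>
      \<Longrightarrow> \<exists>j\<in>Basis. 0 < x \<bullet> j \<and> \<delta> \<le> (na H \<bullet> L j) * level H x"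
    using uniform_crossing_margin[OF eps(1)] by blast
  define X where "X x j = {H\<in>A. x \<in> {y. \<delta> \<le> (na H \<bullet> L j) * level H y}}" for x j
  have "closed {x. K \<le> card (X x j)}" for j
    unfolding X_def using finite_A
    by (intro closed_Collect_card_ge closed_Collect_le continuous_intros continuous_level)
  then obtain x where x: "x \<in> prob_simplex" and deep: "\<And>j. j \<in> Basis \<Longrightarrow> K \<le> card (X x j)"
    using KKM[of "\<lambda>j. {x. K \<le> card (X x j)}"] deep_colour_exists[OF eps(2) crossing assms] unfolding X_def
    by auto
  obtain q where q: "\<And>H v. H \<in> A \<Longrightarrow> 0 < (na H \<bullet> v) * level H x
      \<Longrightarrow> 0 < (na H \<bullet> v) * (nb H - na H \<bullet> q)"
    using point_with_homogeneous_sides[OF finite_A height_nonneg[OF x], of na "comb x" nb]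
    unfolding level_def by blast
  have "K \<le> ray_count A (L j) q" if "j \<in> Basis" for j
  proof (rule order_trans[OF deep[OF that] card_le_ray_count[OF finite_A]])
    fix H assume "H \<in> X x j"
    then have "H \<in> A" "0 < (na H \<bullet> L j) * level H x" using \<open>0 < \<delta>\<close> by (auto simp: X_def)
    then show "\<exists>t>0. q + t *\<^sub>R L j \<in> H"
      using ray_meets_hyperplane[OF q] by (simp add: mem_hyperplane_iff)
  qed (auto simp: X_def)
  then show ?thesis by blast
qed

end

section \<open>Admissible families of directions\<close>

lemma admissible_directionsI_no_zero_combination:
  assumes "\<And>x. x \<in> prob_simplex \<Longrightarrow> (\<Sum>j\<in>Basis. (x \<bullet> j) *\<^sub>R L j) \<noteq> 0"
  shows "admissible_directions L"
  using assms by unfold_locales auto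

lemma combination_of_independent_nonzero:
  fixes L :: "'b::euclidean_space \<Rightarrow> 'a::euclidean_space"
  assumes "independent V" and "\<And>j. j \<in> Basis \<Longrightarrow> L j \<in> V" and "x \<in> prob_simplex"
  shows "(\<Sum>j\<in>Basis. (x \<bullet> j) *\<^sub>R L j) \<noteq> 0"
  using assms(2,3) nonneg_combination_of_independent_nonzero[OF assms(1) finite_Basis, of "inner x" L]
  by (auto simp: prob_simplex_def)

lemma admissible_directionsI_independent:
  fixes L :: "'b::euclidean_space \<Rightarrow> 'a::euclidean_space"
  assumes indep: "\<And>j0. j0 \<in> Basis \<Longrightarrow>
    independent (L ` (Basis - {j0})) \<and> card (L ` (Basis - {j0})) = DIM('a)"
  shows "admissible_directions L"
proof
  fix x :: 'b and j assume x: "x \<in> prob_simplex" and zero: "(\<Sum>j\<in>Basis. (x \<bullet> j) *\<^sub>R L j) = 0"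
  show "0 < x \<bullet> j" if "j \<in> Basis"
  proof (rule ccontr)
    assume "\<not> 0 < x \<bullet> j"
    then have "\<And>i. i \<in> Basis \<Longrightarrow> 0 < x \<bullet> i \<Longrightarrow> L i \<in> L ` (Basis - {j})" by auto
    with zero x show False
      using nonneg_combination_of_independent_nonzero[OF conjunct1[OF indep[OF that]] finite_Basis,
          of "inner x" L]
      by (auto simp: prob_simplex_def)
  qed
  fix a :: 'a assume "a \<noteq> 0"
  with indep[OF SOME_Basis] show "\<exists>j\<in>Basis. a \<bullet> L j \<noteq> 0"
    using independent_card_DIM_not_orthogonal by blast
qed

lemma directions_from_family:
  fixes l :: "nat \<Rightarrow> 'a::euclidean_space"
  assumes "0 < m" and "m \<le> Suc DIM('a)"
    and ind: "\<forall>I\<subseteq>{..<m}. card I \<le> DIM('a) \<longrightarrow> inj_on l I \<and> independent (l ` I)"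
  obtains L :: "'a \<times> real \<Rightarrow> 'a" where "admissible_directions L" and "\<And>i. i < m \<Longrightarrow> l i \<in> L ` Basis"
proof -
  obtain e :: "'a \<times> real \<Rightarrow> nat" where e: "bij_betw e Basis {..<Suc DIM('a)}"
    using ex_bij_betw_finite_nat[of "Basis :: ('a \<times> real) set"] by (auto simp: atLeast0LessThan)
  define L where "L j = l (if e j < m then e j else 0)" for j
  have "l i \<in> L ` Basis" if "i < m" for i
  proof -
    have "i \<in> e ` Basis" using e that assms(2) by (simp add: bij_betw_def)
    then obtain j where "j \<in> Basis" "e j = i" by blast
    with that show ?thesis by (auto simp: L_def)
  qed
  moreover have "admissible_directions L"
  proof (cases "m \<le> DIM('a)")
    case True
    then have "independent (l ` {..<m})" using ind by auto
    moreover have "L j \<in> l ` {..<m}" for j using assms(1) by (auto simp: L_def)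
    ultimately show ?thesis
      by (intro admissible_directionsI_no_zero_combination combination_of_independent_nonzero)
  next
    case False
    with assms(2) have m: "m = Suc DIM('a)" by simp
    show ?thesis
    proof (rule admissible_directionsI_independent)
      fix j0 :: "'a \<times> real" assume "j0 \<in> Basis"
      define I where "I = {..<m} - {e j0}"
      have "e ` (Basis - {j0}) = I"
        using e \<open>j0 \<in> Basis\<close> inj_on_image_set_diff[of e Basis Basis "{j0}"]
        unfolding I_def m by (auto simp: bij_betw_def)
      moreover have "L j = l (e j)" if "j \<in> Basis" for j
        using e that unfolding L_def m by (auto simp: bij_betw_def)
      then have "L ` (Basis - {j0}) = l ` e ` (Basis - {j0})"
        unfolding image_image by (intro image_cong) auto
      ultimately have "L ` (Basis - {j0}) = l ` I" by simp
      moreover have "e j0 < m" using e \<open>j0 \<in> Basis\<close> unfolding m by (auto simp: bij_betw_def)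
      then have "card I = DIM('a)" "I \<subseteq> {..<m}" unfolding I_def m by auto
      ultimately show "independent (L ` (Basis - {j0})) \<and> card (L ` (Basis - {j0})) = DIM('a)"
        using ind by (simp add: card_image)
    qed
  qed
  ultimately show thesis using that by blast
qed

theorem lemma5p4:
  fixes A :: "'a::euclidean_space set set"
    and l :: "nat \<Rightarrow> 'a" and m :: nat and k :: int
  assumes "finite A"
    and "\<forall>H\<in>A. is_hyperplane H"
    and "general_position A"
    and "m \<le> DIM('a) + 1"
    and "\<forall>i<m. l i \<noteq> 0"
    and "\<forall>I\<subseteq>{..<m}. card I \<le> DIM('a) \<longrightarrow> inj_on l I \<and> independent (l ` I)"
    and "k \<le> \<lceil>(real (card A) - real DIM('a)) / (real DIM('a) + 1)\<rceil>"
  shows "(\<Inter>i<m. R_A A k (l i)) \<noteq> {}"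
proof (cases "k \<le> 0 \<or> m = 0")
  case True
  then have "0 \<in> (\<Inter>i<m. R_A A k (l i))" by (auto simp: R_A_def)
  then show ?thesis by blast
next
  case False
  obtain na nb where "\<And>H. H \<in> A \<Longrightarrow> na H \<noteq> 0 \<and> H = {x. na H \<bullet> x = nb H}"
    using hyperplane_equations[OF assms(2)] by blast
  moreover obtain L :: "'a \<times> real \<Rightarrow> 'a"
    where L: "admissible_directions L" "\<And>i. i < m \<Longrightarrow> l i \<in> L ` Basis"
    using directions_from_family[of m l] False assms(4,6) by auto
  ultimately interpret arrangement_with_directions L A na nb
    using assms(1,3) by unfold_locales (auto simp: admissible_directions_def)
  from False have "1 \<le> k" by simp
  from le_ceiling_imp_mult_bound[OF this assms(7)]
  have "DIM('a \<times> real) * (nat k - 1) + DIM('a) < card A"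
    by (simp only: DIM_prod DIM_real Suc_eq_plus1)
  then obtain q where "\<forall>j\<in>Basis. nat k \<le> ray_count A (L j) q"
    using deep_point_all_directions by blast
  with L(2) False have "q \<in> (\<Inter>i<m. R_A A k (l i))"
    by (fastforce simp: R_A_def)
  then show ?thesis by blast
qed

end
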